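(* Let $a\ge2$, let $t\ge3$ be odd, and let $F=\breve F(a^t)$, where $a^t$ is the $t$-tuple $(a,\dots,a)$, with $n=\#F$. Then \[ \hat\chi\equiv\frac n2+a\Big(\sum_{p\text{ peak}}\chi_p-\sum_{v\text{ valley}}\chi_v\Big), \] where $\hat\chi=\sum_{q\in F}\hat\chi_q$ is the order ideal cardinality statistic.
   Context: A fence $\breve F(\alpha_1,\dots,\alpha_t)$ ($t\ge2$, positive integers, $\alpha_1,\alpha_t\ge2$) is the poset on $\{x_1,\dots,x_n\}$, $n=\alpha_1+\dots+\alpha_t-1$, with $a_i=\alpha_1+\dots+\alpha_i$, $a_0=0$, whose cover relations are: for $1\le j\le n-1$ with $a_{i-1}\le j<a_i$, $x_j\lessdot x_{j+1}$ if $i$ odd and $x_j\gtrdot x_{j+1}$ if $i$ even. The elements $x_{a_i}$, $i\in[t-1]$, are peaks (cover two elements, $i$ odd) or valleys (covered by two elements, $i$ even). $\mathcal J(F)$ is the set of order ideals. For $q\in F$, $I\in\mathcal J(F)$: $\hat\chi_q(I)=1$ if $q\in I$, else 0; $\chi_q(I)=1$ if $q\in\max(I)$, else 0; $T_q(I)=1$ if $q\in\min(F\setminus I)$, $-1$ if $q\in\max(I)$, $0$ otherwise. $f\equiv g$ means $f-g=\sum_{q\in F}c_qT_q$ for real constants $c_q$; real numbers denote constant functions. *)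

theory Defs
  imports Complex_Main
begin

(* A fence F(alpha_1,...,alpha_t) is given by the list alpha.
   Its elements x_1..x_n are represented by the naturals 1..n. *)

definition fence_ps :: "nat list \<Rightarrow> nat \<Rightarrow> nat" where
  "fence_ps alpha i = sum_list (take i alpha)"

definition fence_n :: "nat list \<Rightarrow> nat" where
  "fence_n alpha = sum_list alpha - 1"

definition fence_carrier :: "nat list \<Rightarrow> nat set" where
  "fence_carrier alpha = {1..fence_n alpha}"

definition fence_seg :: "nat list \<Rightarrow> nat \<Rightarrow> nat" where
  "fence_seg alpha j = (LEAST i. j < fence_ps alpha i)"

definition fence_cover :: "nat list \<Rightarrow> (nat \<times> nat) set" where
  "fence_cover alpha =
     {(j, j+1) | j. 1 \<le> j \<and> j + 1 \<le> fence_n alpha \<and> odd (fence_seg alpha j)} \<union>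
     {(j+1, j) | j. 1 \<le> j \<and> j + 1 \<le> fence_n alpha \<and> even (fence_seg alpha j)}"

definition fence_le :: "nat list \<Rightarrow> nat \<Rightarrow> nat \<Rightarrow> bool" where
  "fence_le alpha x y \<longleftrightarrow> x \<in> fence_carrier alpha \<and> y \<in> fence_carrier alpha \<and>
      (x, y) \<in> (fence_cover alpha)\<^sup>*"

definition fence_less :: "nat list \<Rightarrow> nat \<Rightarrow> nat \<Rightarrow> bool" where
  "fence_less alpha x y \<longleftrightarrow> fence_le alpha x y \<and> x \<noteq> y"

definition fence_peaks :: "nat list \<Rightarrow> nat set" where
  "fence_peaks alpha = {fence_ps alpha i | i. 1 \<le> i \<and> i \<le> length alpha - 1 \<and> odd i}"

definition fence_valleys :: "nat list \<Rightarrow> nat set" where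
  "fence_valleys alpha = {fence_ps alpha i | i. 1 \<le> i \<and> i \<le> length alpha - 1 \<and> even i}"

definition order_ideals :: "nat list \<Rightarrow> nat set set" where
  "order_ideals alpha = {I. I \<subseteq> fence_carrier alpha \<and>
      (\<forall>x y. y \<in> I \<longrightarrow> fence_le alpha x y \<longrightarrow> x \<in> I)}"

definition in_max :: "nat list \<Rightarrow> nat set \<Rightarrow> nat \<Rightarrow> bool" where
  "in_max alpha I q \<longleftrightarrow> q \<in> I \<and> \<not> (\<exists>y\<in>I. fence_less alpha q y)"

definition in_min_compl :: "nat list \<Rightarrow> nat set \<Rightarrow> nat \<Rightarrow> bool" where
  "in_min_compl alpha I q \<longleftrightarrow> q \<in> fence_carrier alpha - I \<and>
      \<not> (\<exists>y\<in>fence_carrier alpha - I. fence_less alpha y q)"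

definition chi_hat :: "nat \<Rightarrow> nat set \<Rightarrow> real" where
  "chi_hat q I = (if q \<in> I then 1 else 0)"

definition chi :: "nat list \<Rightarrow> nat \<Rightarrow> nat set \<Rightarrow> real" where
  "chi alpha q I = (if in_max alpha I q then 1 else 0)"

definition toggle :: "nat list \<Rightarrow> nat \<Rightarrow> nat set \<Rightarrow> real" where
  "toggle alpha q I = (if in_min_compl alpha I q then 1
                       else if in_max alpha I q then -1 else 0)"

definition toggle_equiv :: "nat list \<Rightarrow> (nat set \<Rightarrow> real) \<Rightarrow> (nat set \<Rightarrow> real) \<Rightarrow> bool" where
  "toggle_equiv alpha f g \<longleftrightarrow> (\<exists>c :: nat \<Rightarrow> real. \<forall>I \<in> order_ideals alpha.
      f I - g I = (\<Sum>q\<in>fence_carrier alpha. c q * toggle alpha q I))"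

end

theory Submission
  imports Defs
begin

(* Write Y(j) for the indicator of x_j in the ideal I, with Y(0) = 1 and Y(n+1) = 0. In F(a^t)
   every element that is neither a peak nor a valley lies in the middle of a chain
   x_(q-1), x_q, x_(q+1), so its toggleability is the second difference
   Y(q-1) - 2 Y(q) + Y(q+1). Weight these by the periodic parabola c(q) = r(r-a)/2, r = q mod a:
   it vanishes at peaks and valleys and its second difference is 1 off them and 1 - a on them,
   so summation by parts turns the sum of c(q) T_q into the sum of all Y(q), minus a times the
   Y's of the peaks and valleys, plus the boundary term (1-a)/2. A peak p is maximal in F, so
   chi_p = Y(p); a valley v is minimal, so T_v = 1 - Y(v) - chi_v. Subtracting a times the
   sum of the T_v therefore trades the remaining Y's for the chi's and leaves the constant n/2. *)

lemma fence_cover_in_carrier: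
  assumes "(x, y) \<in> fence_cover alpha"
  shows "x \<in> fence_carrier alpha" and "y \<in> fence_carrier alpha"
  using assms unfolding fence_cover_def fence_carrier_def by auto

lemma fence_less_of_cover:
  assumes "(x, y) \<in> fence_cover alpha"
  shows "fence_less alpha x y"
  using assms fence_cover_in_carrier[OF assms]
  unfolding fence_less_def fence_le_def fence_cover_def by auto

lemma order_ideal_subset_carrier: "I \<in> order_ideals alpha \<Longrightarrow> I \<subseteq> fence_carrier alpha"
  unfolding order_ideals_def by blast

lemma order_ideal_cover_closed:
  assumes "I \<in> order_ideals alpha" "(x, y) \<in> fence_cover alpha" "y \<in> I"
  shows "x \<in> I"
  using assms fence_less_of_cover[OF assms(2)]
  unfolding order_ideals_def fence_less_def by blast

lemma order_ideal_rtrancl_closed: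
  assumes "I \<in> order_ideals alpha" "(x, y) \<in> (fence_cover alpha)\<^sup>*" "y \<in> I"
  shows "x \<in> I"
  using assms(2,3) by induction (use assms(1) order_ideal_cover_closed in blast)+

lemma in_max_iff_no_upper_cover:
  assumes "I \<in> order_ideals alpha"
  shows "in_max alpha I q \<longleftrightarrow> q \<in> I \<and> (\<forall>y. (q, y) \<in> fence_cover alpha \<longrightarrow> y \<notin> I)"
proof -
  have "(\<exists>y\<in>I. fence_less alpha q y) \<longleftrightarrow> (\<exists>y\<in>I. (q, y) \<in> fence_cover alpha)"
  proof
    assume "\<exists>y\<in>I. fence_less alpha q y"
    then obtain y where "y \<in> I" "(q, y) \<in> (fence_cover alpha)\<^sup>*" "q \<noteq> y"
      unfolding fence_less_def fence_le_def by blast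
    then obtain z where "(q, z) \<in> fence_cover alpha" "(z, y) \<in> (fence_cover alpha)\<^sup>*"
      by (metis converse_rtranclE)
    then show "\<exists>y\<in>I. (q, y) \<in> fence_cover alpha"
      using order_ideal_rtrancl_closed[OF assms] \<open>y \<in> I\<close> by blast
  qed (use fence_less_of_cover in blast)
  then show ?thesis unfolding in_max_def by blast
qed

lemma in_min_compl_iff_lower_covers:
  assumes "I \<in> order_ideals alpha"
  shows "in_min_compl alpha I q \<longleftrightarrow>
           q \<in> fence_carrier alpha \<and> q \<notin> I \<and> (\<forall>y. (y, q) \<in> fence_cover alpha \<longrightarrow> y \<in> I)"
proof -
  have "(\<exists>y\<in>fence_carrier alpha - I. fence_less alpha y q) \<longleftrightarrow>
        (\<exists>y. (y, q) \<in> fence_cover alpha \<and> y \<notin> I)"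
  proof
    assume "\<exists>y\<in>fence_carrier alpha - I. fence_less alpha y q"
    then obtain y where "y \<notin> I" "(y, q) \<in> (fence_cover alpha)\<^sup>*" "y \<noteq> q"
      unfolding fence_less_def fence_le_def by blast
    then obtain z where "(y, z) \<in> (fence_cover alpha)\<^sup>*" "(z, q) \<in> fence_cover alpha"
      by (metis rtranclE)
    then show "\<exists>y. (y, q) \<in> fence_cover alpha \<and> y \<notin> I"
      using order_ideal_rtrancl_closed[OF assms] \<open>y \<notin> I\<close> by blast
  qed (use fence_less_of_cover fence_cover_in_carrier in blast)
  then show ?thesis unfolding in_min_compl_def by blast
qed

(* Y(0) = 1 acts as a phantom bottom element below x_1. *)
definition ideal_indicator :: "nat set \<Rightarrow> nat \<Rightarrow> real" where
  "ideal_indicator I j = (if j = 0 \<or> j \<in> I then 1 else 0)"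

(* q covers only lo and is covered only by hi; lo = 0 and hi outside the fence encode a missing
   cover, and ideal_indicator takes the matching values 1 and 0 there. *)
lemma toggle_chain_element:
  assumes I: "I \<in> order_ideals alpha" and q: "q \<in> fence_carrier alpha"
    and lower: "\<And>y. (y, q) \<in> fence_cover alpha \<longleftrightarrow> y = lo \<and> lo \<noteq> 0"
    and upper: "\<And>y. (q, y) \<in> fence_cover alpha \<longleftrightarrow> y = hi \<and> hi \<in> fence_carrier alpha"
    and "hi \<noteq> 0"
  shows "toggle alpha q I =
           ideal_indicator I lo - 2 * ideal_indicator I q + ideal_indicator I hi"
proof -
  have "q \<noteq> 0" using q unfolding fence_carrier_def by simp
  have lo: "q \<in> I \<Longrightarrow> lo \<noteq> 0 \<Longrightarrow> lo \<in> I"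
    using order_ideal_cover_closed[OF I] lower by blast
  have hi: "hi \<in> I \<Longrightarrow> q \<in> I"
    using order_ideal_cover_closed[OF I] upper order_ideal_subset_carrier[OF I] by blast
  show ?thesis
    unfolding toggle_def in_min_compl_iff_lower_covers[OF I] in_max_iff_no_upper_cover[OF I]
      ideal_indicator_def lower upper
    using q lo hi \<open>q \<noteq> 0\<close> \<open>hi \<noteq> 0\<close> order_ideal_subset_carrier[OF I] by auto
qed

lemma sum_second_difference_by_parts:
  fixes c y :: "nat \<Rightarrow> 'a::comm_ring_1"
  shows "(\<Sum>q=1..n. c q * (y (q - 1) - 2 * y q + y (q + 1))) =
         (\<Sum>q=1..n. y q * (c (q - 1) - 2 * c q + c (q + 1)))
           + c 1 * y 0 - c 0 * y 1 + c n * y (n + 1) - c (n + 1) * y n"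
proof (induction n)
  case (Suc n)
  then show ?case by (cases n) (simp_all add: algebra_simps)
qed simp

definition parabola_mod :: "nat \<Rightarrow> nat \<Rightarrow> real" where
  "parabola_mod a q = real (q mod a) * (real (q mod a) - real a) / 2"

lemma parabola_mod_on_period:
  assumes "0 < a" "k * a \<le> q" "q \<le> (k + 1) * a"
  shows "parabola_mod a q = (real q - real (k * a)) * (real q - real ((k + 1) * a)) / 2"
proof (cases "q = (k + 1) * a")
  case False
  then have "q div a = k" using assms by (intro div_nat_eqI) (auto simp: algebra_simps)
  then have "q mod a = q - k * a" by (simp add: minus_div_mult_eq_mod[symmetric])
  then show ?thesis using assms(2) by (simp add: parabola_mod_def of_nat_diff algebra_simps)
qed (simp add: parabola_mod_def)

lemma parabola_mod_second_difference:
  assumes "0 < a" "1 \<le> q"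
  shows "parabola_mod a (q - 1) - 2 * parabola_mod a q + parabola_mod a (q + 1) =
           (if a dvd q then 1 - real a else 1)"
proof (cases "a dvd q")
  case True
  then obtain k where k: "q = k * a" "1 \<le> k" using assms by (auto elim!: dvdE)
  have "parabola_mod a (q - 1) = (real a - 1) * (- 1) / 2"
    using parabola_mod_on_period[OF assms(1), of "k - 1" "q - 1"] k assms
    by (simp add: of_nat_diff algebra_simps)
  moreover have "parabola_mod a (q + 1) = 1 * (1 - real a) / 2"
    using parabola_mod_on_period[OF assms(1), of k "q + 1"] k assms
    by (simp add: algebra_simps)
  moreover have "parabola_mod a q = 0" using True by (simp add: parabola_mod_def)
  ultimately show ?thesis using True by (simp add: field_simps)
next
  case False
  define k where "k = q div a"
  define A B where "A = real (k * a)" and "B = real ((k + 1) * a)"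
  have "k * a \<le> q" unfolding k_def by (rule div_times_less_eq_dividend)
  moreover have "k * a \<noteq> q" using False by auto
  moreover have "q < (k + 1) * a"
    using div_less_iff_less_mult[OF assms(1), of q "k + 1"] by (simp add: k_def)
  ultimately have on_period: "parabola_mod a j = (real j - A) * (real j - B) / 2"
    if "j \<in> {q - 1, q, q + 1}" for j
    using that unfolding A_def B_def by (intro parabola_mod_on_period[OF assms(1)]) auto
  have "real (q - 1) = real q - 1" using assms(2) by simp
  then show ?thesis
    using on_period[of "q - 1"] on_period[of q] on_period[of "q + 1"] False
    by (simp add: field_simps)
qed

lemma pred_mult_div: "0 < a \<Longrightarrow> 1 \<le> k \<Longrightarrow> (k * a - 1) div a = k - (1::nat)"
  by (rule div_nat_eqI) (auto simp: algebra_simps diff_mult_distrib2)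

lemma pred_div_of_not_dvd: "\<not> a dvd q \<Longrightarrow> (q - 1) div a = q div (a::nat)"
  by (cases q) (auto simp: div_Suc dvd_eq_mod_eq_0)

lemma card_even_atLeastAtMost: "card {k \<in> {1..n}. even k} = n div 2"
proof (induction n)
  case (Suc n)
  have "{k \<in> {1..Suc n}. even k} =
        (if even (Suc n) then insert (Suc n) {k \<in> {1..n}. even k} else {k \<in> {1..n}. even k})"
    by (auto simp: le_Suc_eq)
  then show ?case using Suc by simp
qed simp

lemma fence_ps_replicate: "fence_ps (replicate t a) i = min i t * a"
  unfolding fence_ps_def by (simp add: take_replicate sum_list_replicate)

lemma fence_n_replicate: "fence_n (replicate t a) = t * a - 1"
  unfolding fence_n_def by (simp add: sum_list_replicate)

lemma fence_carrier_replicate: "fence_carrier (replicate t a) = {1..t * a - 1}"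
  unfolding fence_carrier_def fence_n_replicate ..

lemma fence_seg_replicate:
  assumes "0 < a" "j < t * a"
  shows "fence_seg (replicate t a) j = j div a + 1"
  unfolding fence_seg_def fence_ps_replicate
proof (rule Least_equality)
  have "j div a < t" using assms by (simp add: less_mult_imp_div_less)
  then show "j < min (j div a + 1) t * a"
    using div_less_iff_less_mult[OF assms(1), of j "j div a + 1"] by simp
next
  fix i assume "j < min i t * a"
  then have "j < i * a" by (meson less_le_trans min.cobounded1 mult_le_mono1)
  then show "j div a + 1 \<le> i" using div_less_iff_less_mult[OF assms(1)] by (simp add: Suc_le_eq)
qed

lemma fence_cover_replicate:
  assumes "0 < a"
  shows "(x, y) \<in> fence_cover (replicate t a) \<longleftrightarrow>
    (y = x + 1 \<and> 1 \<le> x \<and> x + 1 \<le> t * a - 1 \<and> even (x div a)) \<or>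
    (x = y + 1 \<and> 1 \<le> y \<and> y + 1 \<le> t * a - 1 \<and> odd (y div a))"
proof -
  have "fence_seg (replicate t a) j = j div a + 1" if "j + 1 \<le> t * a - 1" for j
    using fence_seg_replicate[OF assms] that by simp
  then show ?thesis unfolding fence_cover_def fence_n_replicate by auto
qed

lemma fence_ps_replicate_image:
  "{fence_ps (replicate t a) i | i. 1 \<le> i \<and> i \<le> length (replicate t a) - 1 \<and> P i} =
     (\<lambda>k. k * a) ` {k \<in> {1..t - 1}. P k}"
  unfolding setcompr_eq_image length_replicate
proof (rule image_cong)
  show "{i. 1 \<le> i \<and> i \<le> t - 1 \<and> P i} = {k \<in> {1..t - 1}. P k}" by auto
next
  fix i assume "i \<in> {k \<in> {1..t - 1}. P k}"
  then show "fence_ps (replicate t a) i = i * a" by (auto simp: fence_ps_replicate min_def)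
qed

lemma multiples_in_fence_carrier_replicate:
  fixes a t :: nat
  assumes "0 < a"
  shows "{q \<in> {1..t * a - 1}. a dvd q} = (\<lambda>k. k * a) ` {1..t - 1}"
proof (intro set_eqI iffI)
  fix q assume q: "q \<in> {q \<in> {1..t * a - 1}. a dvd q}"
  define k where "k = q div a"
  have k: "q = k * a" using q by (simp add: k_def)
  have "1 \<le> k * a" "k * a \<le> t * a - 1" using q unfolding k by simp_all
  then have "k * a < t * a" by linarith
  then have "k < t" "k \<noteq> 0" using \<open>1 \<le> k * a\<close> by simp_all
  then have "k \<in> {1..t - 1}" by simp
  then show "q \<in> (\<lambda>k. k * a) ` {1..t - 1}" unfolding k by blast
next
  fix q assume "q \<in> (\<lambda>k. k * a) ` {1..t - 1}"
  then obtain k where k: "q = k * a" "k \<in> {1..t - 1}" by blast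
  then have "k + 1 \<le> t" by auto
  then have "k * a + a \<le> t * a" using mult_le_mono1[of "k + 1" t a] by simp
  moreover have "1 \<le> k * a" using k(2) assms by simp
  ultimately show "q \<in> {q \<in> {1..t * a - 1}. a dvd q}" using assms unfolding k(1) by simp
qed

lemma fence_peaks_replicate:
  "fence_peaks (replicate t a) = (\<lambda>k. k * a) ` {k \<in> {1..t - 1}. odd k}"
  unfolding fence_peaks_def by (rule fence_ps_replicate_image)

lemma fence_valleys_replicate:
  "fence_valleys (replicate t a) = (\<lambda>k. k * a) ` {k \<in> {1..t - 1}. even k}"
  unfolding fence_valleys_def by (rule fence_ps_replicate_image)

lemma card_fence_valleys_replicate:
  assumes "0 < a"
  shows "card (fence_valleys (replicate t a)) = (t - 1) div 2"
proof -
  have "inj_on (\<lambda>k. k * a) A" for A using assms by (simp add: inj_on_def)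
  then show ?thesis
    unfolding fence_valleys_replicate by (simp only: card_image card_even_atLeastAtMost)
qed

lemma fence_peaks_valleys_replicate:
  assumes "0 < a"
  shows "fence_peaks (replicate t a) \<union> fence_valleys (replicate t a) =
           {q \<in> {1..t * a - 1}. a dvd q}"
    and "fence_peaks (replicate t a) \<inter> fence_valleys (replicate t a) = {}"
proof -
  show "fence_peaks (replicate t a) \<union> fence_valleys (replicate t a) =
           {q \<in> {1..t * a - 1}. a dvd q}"
    unfolding fence_peaks_replicate fence_valleys_replicate
      multiples_in_fence_carrier_replicate[OF assms] image_Un[symmetric]
    by (rule arg_cong[where f = "image (\<lambda>k. k * a)"]) auto
  show "fence_peaks (replicate t a) \<inter> fence_valleys (replicate t a) = {}"
    unfolding fence_peaks_replicate fence_valleys_replicate using assms by auto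
qed

context
  fixes a t :: nat and I :: "nat set"
  assumes a_pos: "0 < a" and ideal: "I \<in> order_ideals (replicate t a)"
begin

lemma chi_replicate_peak:
  assumes "odd k"
  shows "chi (replicate t a) (k * a) I = ideal_indicator I (k * a)"
proof -
  have "1 \<le> k" using odd_pos[OF assms] by simp
  then have "(k * a - 1) div a = k - 1" "even (k - 1)" "k * a \<noteq> 0"
    using assms a_pos pred_mult_div[OF a_pos] by auto
  then have "(k * a, y) \<notin> fence_cover (replicate t a)" for y
    using assms a_pos by (auto simp: fence_cover_replicate)
  then show ?thesis
    using \<open>k * a \<noteq> 0\<close>
    by (simp add: chi_def ideal_indicator_def in_max_iff_no_upper_cover[OF ideal])
qed

lemma toggle_replicate_valley:
  assumes "even k" "1 \<le> k" "k < t"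
  shows "toggle (replicate t a) (k * a) I =
           1 - ideal_indicator I (k * a) - chi (replicate t a) (k * a) I"
proof -
  have "(k * a - 1) div a = k - 1" "odd (k - 1)"
    using assms pred_mult_div[OF a_pos, of k] by auto
  then have "(y, k * a) \<notin> fence_cover (replicate t a)" for y
    using assms a_pos by (auto simp: fence_cover_replicate)
  moreover have "k * a \<in> fence_carrier (replicate t a)"
    using assms a_pos mult_le_mono1[of "k + 1" t a]
    by (auto simp: fence_carrier_replicate algebra_simps)
  ultimately have "in_min_compl (replicate t a) I (k * a) \<longleftrightarrow> k * a \<notin> I"
    by (simp add: in_min_compl_iff_lower_covers[OF ideal])
  moreover have "k * a \<noteq> 0" using assms a_pos by simp
  ultimately show ?thesis
    by (auto simp: toggle_def chi_def ideal_indicator_def in_max_def)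
qed

lemma sum_chi_peaks_replicate:
  "(\<Sum>p\<in>fence_peaks (replicate t a). chi (replicate t a) p I) =
     (\<Sum>p\<in>fence_peaks (replicate t a). ideal_indicator I p)"
  by (rule sum.cong) (auto simp: fence_peaks_replicate chi_replicate_peak)

context
  assumes odd_t: "odd t"
begin

lemma toggle_replicate_not_dvd:
  assumes q: "q \<in> {1..t * a - 1}" "\<not> a dvd q"
  shows "toggle (replicate t a) q I =
           ideal_indicator I (q - 1) - 2 * ideal_indicator I q + ideal_indicator I (q + 1)"
proof -
  have div_eq: "(q - 1) div a = q div a" using pred_div_of_not_dvd q(2) .
  note covers = fence_cover_replicate[OF a_pos] fence_carrier_replicate
  show ?thesis
  proof (cases "even (q div a)")
    case True
    have "(y, q) \<in> fence_cover (replicate t a) \<longleftrightarrow> y = q - 1 \<and> q - 1 \<noteq> 0" for y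
      using q True div_eq by (auto simp: covers)
    moreover have "(q, y) \<in> fence_cover (replicate t a) \<longleftrightarrow>
        y = q + 1 \<and> q + 1 \<in> fence_carrier (replicate t a)" for y
      using q True div_eq by (auto simp: covers)
    ultimately show ?thesis by (rule toggle_chain_element[OF ideal q(1)[folded covers(2)]]) simp
  next
    case False
    \<comment> \<open>t is odd, so the last block ascends and a descending block lies strictly inside F\<close>
    have "q < t * a" using q(1) by auto
    have "q div a + 2 \<le> t"
      using less_mult_imp_div_less[OF \<open>q < t * a\<close>] odd_t False
      by (cases "q div a + 1 = t") auto
    then have "q + 2 \<le> t * a"
      using div_less_iff_less_mult[OF a_pos, of q "q div a + 1"] a_pos
      by (auto simp: algebra_simps dest: mult_le_mono1[of _ _ a])
    moreover have "a < q"
      using False q(2) div_greater_zero_iff[of q a] by (cases "q div a = 0") (auto simp: le_less)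
    ultimately have "(y, q) \<in> fence_cover (replicate t a) \<longleftrightarrow> y = q + 1 \<and> q + 1 \<noteq> 0"
      and "(q, y) \<in> fence_cover (replicate t a) \<longleftrightarrow>
        y = q - 1 \<and> q - 1 \<in> fence_carrier (replicate t a)" for y
      using q False div_eq by (auto simp: covers)
    then have "toggle (replicate t a) q I =
        ideal_indicator I (q + 1) - 2 * ideal_indicator I q + ideal_indicator I (q - 1)"
      using \<open>a < q\<close> a_pos by (intro toggle_chain_element[OF ideal q(1)[folded covers(2)]]) auto
    then show ?thesis by simp
  qed
qed

lemma sum_parabola_mod_toggle:
  "(\<Sum>q=1..t * a - 1. parabola_mod a q * toggle (replicate t a) q I) =
     (\<Sum>q=1..t * a - 1. ideal_indicator I q)
       - real a * (\<Sum>q\<in>{q \<in> {1..t * a - 1}. a dvd q}. ideal_indicator I q) + (1 - real a) / 2"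
proof -
  define N where "N = t * a - 1"
  let ?Y = "ideal_indicator I"
  have N: "N + 1 = t * a" using a_pos odd_pos[OF odd_t] by (simp add: N_def)
  have "(\<Sum>q=1..N. parabola_mod a q * toggle (replicate t a) q I) =
        (\<Sum>q=1..N. parabola_mod a q * (?Y (q - 1) - 2 * ?Y q + ?Y (q + 1)))"
    using toggle_replicate_not_dvd
    by (intro sum.cong) (auto simp: N_def parabola_mod_def dvd_eq_mod_eq_0)
  also have "\<dots> = (\<Sum>q=1..N. ?Y q * (if a dvd q then 1 - real a else 1)) + (1 - real a) / 2"
  proof -
    have "parabola_mod a 1 = (1 - real a) / 2"
      using parabola_mod_on_period[OF a_pos, of 0 1] a_pos by simp
    moreover have "parabola_mod a 0 = 0" "parabola_mod a (N + 1) = 0"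
      unfolding N by (simp_all add: parabola_mod_def)
    moreover have "?Y 0 = 1" "?Y (N + 1) = 0"
      using order_ideal_subset_carrier[OF ideal]
      by (auto simp: ideal_indicator_def fence_carrier_replicate N_def)
    ultimately show ?thesis
      using sum_second_difference_by_parts[of "parabola_mod a" ?Y N]
        parabola_mod_second_difference[OF a_pos]
      by simp
  qed
  also have "(\<Sum>q=1..N. ?Y q * (if a dvd q then 1 - real a else 1)) =
             (\<Sum>q=1..N. ?Y q) - real a * (\<Sum>q\<in>{q \<in> {1..N}. a dvd q}. ?Y q)"
  proof -
    have "?Y q * (if a dvd q then 1 - real a else 1) =
          ?Y q - (if a dvd q then real a * ?Y q else 0)" for q
      by (simp add: algebra_simps)
    then have "(\<Sum>q=1..N. ?Y q * (if a dvd q then 1 - real a else 1)) =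
        (\<Sum>q=1..N. ?Y q) - (\<Sum>q=1..N. if a dvd q then real a * ?Y q else 0)"
      by (simp add: sum_subtractf)
    also have "(\<Sum>q=1..N. if a dvd q then real a * ?Y q else 0) =
        (\<Sum>q\<in>{q \<in> {1..N}. a dvd q}. real a * ?Y q)"
      by (rule sum.inter_filter[symmetric]) simp
    finally show ?thesis by (simp only: sum_distrib_left)
  qed
  finally show ?thesis unfolding N_def .
qed

lemma sum_toggle_valleys_replicate:
  "(\<Sum>v\<in>fence_valleys (replicate t a). toggle (replicate t a) v I) =
     (real t - 1) / 2 - (\<Sum>v\<in>fence_valleys (replicate t a). ideal_indicator I v)
       - (\<Sum>v\<in>fence_valleys (replicate t a). chi (replicate t a) v I)"
proof -
  have "(\<Sum>v\<in>fence_valleys (replicate t a). toggle (replicate t a) v I) =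
        (\<Sum>v\<in>fence_valleys (replicate t a). 1 - ideal_indicator I v - chi (replicate t a) v I)"
    by (rule sum.cong) (auto simp: fence_valleys_replicate toggle_replicate_valley)
  moreover have "real (card (fence_valleys (replicate t a))) = (real t - 1) / 2"
    using card_fence_valleys_replicate[OF a_pos] odd_t by (auto elim!: oddE)
  ultimately show ?thesis by (simp add: sum_subtractf)
qed

lemma sum_weighted_toggle_replicate:
  "(\<Sum>q\<in>fence_carrier (replicate t a).
      (parabola_mod a q - (if q \<in> fence_valleys (replicate t a) then real a else 0))
        * toggle (replicate t a) q I) =
   (\<Sum>q\<in>fence_carrier (replicate t a). chi_hat q I) -
     (real (fence_n (replicate t a)) / 2 +
      real a * ((\<Sum>p\<in>fence_peaks (replicate t a). chi (replicate t a) p I)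
                - (\<Sum>v\<in>fence_valleys (replicate t a). chi (replicate t a) v I)))"
proof -
  let ?F = "replicate t a" and ?Y = "ideal_indicator I"
  let ?T = "\<lambda>q. toggle ?F q I" and ?P = "fence_peaks ?F" and ?V = "fence_valleys ?F"
  have "1 \<le> t * a" using a_pos odd_pos[OF odd_t] by simp
  have multiples: "?P \<union> ?V = {q \<in> {1..t * a - 1}. a dvd q}" "?P \<inter> ?V = {}"
    using fence_peaks_valleys_replicate[OF a_pos] by blast+
  have "finite (?P \<union> ?V)" unfolding multiples(1) by simp
  then have "finite ?P" "finite ?V" by simp_all
  have "(\<Sum>q\<in>{1..t * a - 1}. (if q \<in> ?V then real a else 0) * ?T q) =
        (\<Sum>q\<in>{1..t * a - 1} \<inter> ?V. real a * ?T q)"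
    unfolding sum.inter_restrict[OF finite_atLeastAtMost] by (rule sum.cong) auto
  also have "{1..t * a - 1} \<inter> ?V = ?V" using multiples(1) by blast
  finally have weights: "(\<Sum>q\<in>fence_carrier ?F.
      (parabola_mod a q - (if q \<in> ?V then real a else 0)) * ?T q) =
      (\<Sum>q=1..t * a - 1. parabola_mod a q * ?T q) - real a * (\<Sum>v\<in>?V. ?T v)"
    by (simp add: fence_carrier_replicate left_diff_distrib sum_subtractf sum_distrib_left)
  have "(\<Sum>q\<in>fence_carrier ?F. chi_hat q I) = (\<Sum>q=1..t * a - 1. ?Y q)"
    by (rule sum.cong) (auto simp: fence_carrier_replicate chi_hat_def ideal_indicator_def)
  moreover have "(\<Sum>q\<in>{q \<in> {1..t * a - 1}. a dvd q}. ?Y q) = (\<Sum>p\<in>?P. ?Y p) + (\<Sum>v\<in>?V. ?Y v)"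
    unfolding multiples(1)[symmetric] using \<open>finite ?P\<close> \<open>finite ?V\<close> multiples(2)
    by (rule sum.union_disjoint)
  moreover have "real (fence_n ?F) = real t * real a - 1"
    using \<open>1 \<le> t * a\<close> by (simp add: fence_n_replicate of_nat_diff)
  ultimately show ?thesis
    unfolding weights sum_parabola_mod_toggle sum_toggle_valleys_replicate sum_chi_peaks_replicate
    by (simp add: field_simps)
qed

end

end

theorem theorem5p3:
  fixes a t :: nat
  assumes "a \<ge> 2" and "t \<ge> 3" and "odd t"
  defines "alpha \<equiv> replicate t a"
  shows "toggle_equiv alpha
           (\<lambda>I. \<Sum>q\<in>fence_carrier alpha. chi_hat q I)
           (\<lambda>I. real (fence_n alpha) / 2 +
                 real a * ((\<Sum>p\<in>fence_peaks alpha. chi alpha p I)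
                           - (\<Sum>v\<in>fence_valleys alpha. chi alpha v I)))"
proof -
  \<comment> \<open>of the hypotheses only 0 < a and odd t are used\<close>
  have "0 < a" using \<open>a \<ge> 2\<close> by simp
  show ?thesis
    unfolding toggle_equiv_def alpha_def
    by (intro exI[of _ "\<lambda>q. parabola_mod a q
                        - (if q \<in> fence_valleys (replicate t a) then real a else 0)"] ballI)
      (rule sum_weighted_toggle_replicate[symmetric, OF \<open>0 < a\<close> _ \<open>odd t\<close>])
qed

end
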